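(* Consider the problem \[ \min_{\hat{\mathbf W}\in\mathbb{R}^{(p+1)\times q},\ \mathbf z\in\mathbb{R}^m}\ f(\hat{\mathbf W},\mathbf z):=\tfrac12\langle \hat{\mathbf W},\hat{\mathbf W}\rangle+\beta\|\mathbf z_+\|_0 \quad\text{s.t.}\quad \mathbf 1+\mathscr A(\hat{\mathbf W})=\mathbf z,\ \ \operatorname{rank}(\hat{\mathbf W})\le r, \] where $\beta>0$, $r<\min\{p+1,q\}$ is a positive integer, $\mathbf A_1,\dots,\mathbf A_m\in\mathbb{R}^{(p+1)\times q}$ are given, and $\mathscr A(\hat{\mathbf W})=(\langle \mathbf A_1,\hat{\mathbf W}\rangle,\dots,\langle \mathbf A_m,\hat{\mathbf W}\rangle)^\top$. Let $(\hat{\mathbf W},\mathbf z)$ be a local minimizer of this problem and suppose the constraint qualification below (Assumption 1) holds at $\hat{\mathbf W}$. Then $(\hat{\mathbf W},\mathbf z)$ is a KKT point of the problem.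
   Context: Notation: $\langle \mathbf W,\mathbf Y\rangle=\operatorname{tr}(\mathbf W^\top\mathbf Y)$; $\mathbf 1\in\mathbb{R}^m$ is the all-ones vector; for $\mathbf z\in\mathbb{R}^m$, $\mathbf z_+$ is the componentwise positive part and $\|\mathbf z_+\|_0$ is the number of strictly positive entries of $\mathbf z$. The adjoint is $\mathscr A^*(\boldsymbol\lambda)=\sum_{i=1}^m \lambda_i\mathbf A_i$. Sets: $\mathcal L=\{(\hat{\mathbf W},\mathbf z): \mathbf 1+\mathscr A(\hat{\mathbf W})=\mathbf z\}$, $\mathcal R=\{\hat{\mathbf W}:\operatorname{rank}(\hat{\mathbf W})\le r\}$, feasible set $\mathcal F=\mathcal L\cap\mathcal R$ (viewed in $\mathbb{R}^{(p+1)\times q}\times\mathbb{R}^m$). For a set $C$ and $x\in C$, $\mathrm N_C(x)$ is the regular (Fréchet) normal cone $\{v:\limsup_{x'\to x,\,x'\in C,\,x'\neq x}\langle v,x'-x\rangle/\|x'-x\|\le 0\}$. Lagrangian: $\mathscr L(\hat{\mathbf W},\mathbf z,\boldsymbol\lambda)=\tfrac12\langle\hat{\mathbf W},\hat{\mathbf W}\rangle+\beta\|\mathbf z_+\|_0+\langle\boldsymbol\lambda,\mathbf 1+\mathscr A(\hat{\mathbf W})-\mathbf z\rangle$, with $\nabla_{\hat{\mathbf W}}\mathscr L=\hat{\mathbf W}+\mathscr A^*(\boldsymbol\lambda)$ and $\partial_{\mathbf z}\mathscr L=\beta\,\partial\|\mathbf z_+\|_0-\boldsymbol\lambda$, where the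 regular subdifferential is $\partial\|\mathbf z_+\|_0=\{\mathbf d\in\mathbb{R}^m: d_i=0 \text{ if } z_i\neq0,\ d_i\ge 0 \text{ if } z_i=0\}$. KKT point: $(\hat{\mathbf W},\mathbf z)$ is a KKT point if there exists $\boldsymbol\lambda\in\mathbb{R}^m$ such that $-\partial_{(\hat{\mathbf W},\mathbf z)}\mathscr L(\hat{\mathbf W},\mathbf z,\boldsymbol\lambda)\in \mathrm N_{\mathcal F}(\hat{\mathbf W},\mathbf z)$ (i.e., some element of the partial subdifferential of $\mathscr L$ in $(\hat{\mathbf W},\mathbf z)$ has its negative in the normal cone), $\operatorname{rank}(\hat{\mathbf W})\le r$, and $\mathbf 1+\mathscr A(\hat{\mathbf W})-\mathbf z=0$. Assumption 1 at $\hat{\mathbf W}$: let $s=\operatorname{rank}(\hat{\mathbf W})$ and $\hat{\mathbf W}=\mathbf U\Sigma\mathbf V^\top$ be an SVD with $\mathbf U$, $\mathbf V$ orthogonal of sizes $p+1$, $q$; let $\Gamma$ be the index set of nonzero singular values, $\Gamma_p^\perp=\{1,\dots,p+1\}\setminus\Gamma$, $\Gamma_q^\perp=\{1,\dots,q\}\setminus\Gamma$, and $\mathbf U_J$, $\mathbf V_J$ the column submatrices indexed by $J$. Define $\mathbf T^i=\begin{bmatrix}\mathbf U_\Gamma^\top\mathbf A_i\mathbf V_\Gamma & \mathbf U_\Gamma^\top\mathbf A_i\mathbf V_{\Gamma_q^\perp}\\ \mathbf U_{\Gamma_p^\perp}^\top\mathbf A_i\mathbf V_\Gamma & \mathbf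 O\end{bmatrix}$ and $\mathbf R^i=\mathbf U^\top\mathbf A_i\mathbf V_\Gamma$, $i=1,\dots,m$. The assumption is: if $s=r$, the matrices $\mathbf T^1,\dots,\mathbf T^m$ are linearly independent; if $s<r$, the matrices $\mathbf R^1,\dots,\mathbf R^m$ are linearly independent. *)

theory Defs
  imports "HOL-Analysis.Analysis"
begin

text \<open>Matrices in R^((p+1) x q) are rendered as real^'q^'p (rows indexed by the finite type 'p with
CARD('p) = p+1, columns by 'q with CARD('q) = q); vectors in R^m as real^'m.
The Frobenius inner product tr(W^T Y) is the library inner product W \<bullet> Y on real^'q^'p.\<close>

definition opA :: "('m::finite \<Rightarrow> real^'q::finite^'p::finite) \<Rightarrow> real^'q^'p \<Rightarrow> real^'m" where
  "opA A W = (\<chi> i. A i \<bullet> W)"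

definition opA_adj :: "('m::finite \<Rightarrow> real^'q::finite^'p::finite) \<Rightarrow> real^'m \<Rightarrow> real^'q^'p" where
  "opA_adj A lam = (\<Sum>i\<in>UNIV. (lam $ i) *\<^sub>R A i)"

definition ones :: "real^'m::finite" where
  "ones = (\<chi> i. 1)"

definition pos_l0 :: "real^'m::finite \<Rightarrow> nat" where
  "pos_l0 z = card {i. z $ i > 0}"

definition objf :: "real \<Rightarrow> real^'q::finite^'p::finite \<Rightarrow> real^'m::finite \<Rightarrow> real" where
  "objf \<beta> W z = (1/2) * (W \<bullet> W) + \<beta> * real (pos_l0 z)"

definition feas_set :: "('m::finite \<Rightarrow> real^'q::finite^'p::finite) \<Rightarrow> nat \<Rightarrow> ((real^'q^'p) \<times> (real^'m)) set" where
  "feas_set A r = {(W, z). ones + opA A W = z \<and> rank W \<le> r}"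

definition local_minimizer ::
  "real \<Rightarrow> ('m::finite \<Rightarrow> real^'q::finite^'p::finite) \<Rightarrow> nat \<Rightarrow> real^'q^'p \<Rightarrow> real^'m \<Rightarrow> bool" where
  "local_minimizer \<beta> A r W z \<longleftrightarrow> (W, z) \<in> feas_set A r \<and>
     (\<exists>e>0. \<forall>W' z'. (W', z') \<in> feas_set A r \<and> dist (W', z') (W, z) < e \<longrightarrow>
        objf \<beta> W z \<le> objf \<beta> W' z')"

text \<open>Regular (Frechet) normal cone, with the limsup condition written out:
 limsup_{x' \<rightarrow> x, x' \<in> C, x' \<noteq> x} <v, x'-x>/||x'-x|| \<le> 0.\<close>
definition reg_normal_cone :: "'a::real_inner set \<Rightarrow> 'a \<Rightarrow> 'a set" where
  "reg_normal_cone C x = {v. \<forall>\<epsilon>>0. \<exists>\<delta>>0. \<forall>x'\<in>C. x' \<noteq> x \<and> dist x' x < \<delta> \<longrightarrow>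
      inner v (x' - x) / norm (x' - x) \<le> \<epsilon>}"

definition subdiff_pos_l0 :: "real^'m::finite \<Rightarrow> (real^'m) set" where
  "subdiff_pos_l0 z = {d. \<forall>i. (z $ i \<noteq> 0 \<longrightarrow> d $ i = 0) \<and> (z $ i = 0 \<longrightarrow> d $ i \<ge> 0)}"

definition KKT_point ::
  "real \<Rightarrow> ('m::finite \<Rightarrow> real^'q::finite^'p::finite) \<Rightarrow> nat \<Rightarrow> real^'q^'p \<Rightarrow> real^'m \<Rightarrow> bool" where
  "KKT_point \<beta> A r W z \<longleftrightarrow>
     (\<exists>lam::real^'m. \<exists>d \<in> subdiff_pos_l0 z.
        - (W + opA_adj A lam, \<beta> *\<^sub>R d - lam) \<in> reg_normal_cone (feas_set A r) (W, z))
     \<and> rank W \<le> r \<and> ones + opA A W - z = 0"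

definition lin_indep_family :: "('i::finite \<Rightarrow> 'v::real_vector) \<Rightarrow> bool" where
  "lin_indep_family T \<longleftrightarrow> (\<forall>c::'i \<Rightarrow> real. (\<Sum>i\<in>UNIV. c i *\<^sub>R T i) = 0 \<longrightarrow> (\<forall>i. c i = 0))"

text \<open>Middle factor of an SVD, up to a simultaneous reordering of the columns of U and V:
 nonnegative entries and at most one nonzero entry in every row and every column.\<close>
definition svd_middle :: "real^'q::finite^'p::finite \<Rightarrow> bool" where
  "svd_middle S \<longleftrightarrow> (\<forall>a b. S $ a $ b \<ge> 0) \<and>
     (\<forall>a b b'. S $ a $ b \<noteq> 0 \<and> S $ a $ b' \<noteq> 0 \<longrightarrow> b = b') \<and>
     (\<forall>a a' b. S $ a $ b \<noteq> 0 \<and> S $ a' $ b \<noteq> 0 \<longrightarrow> a = a')"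

definition is_svd :: "real^'q::finite^'p::finite \<Rightarrow> real^'p^'p \<Rightarrow> real^'q^'p \<Rightarrow> real^'q^'q \<Rightarrow> bool" where
  "is_svd W U S V \<longleftrightarrow> orthogonal_matrix U \<and> orthogonal_matrix V \<and> svd_middle S \<and>
     W = U ** S ** transpose V"

definition Gam_p :: "real^'q::finite^'p::finite \<Rightarrow> 'p set" where
  "Gam_p S = {a. \<exists>b. S $ a $ b \<noteq> 0}"
definition Gam_q :: "real^'q::finite^'p::finite \<Rightarrow> 'q set" where
  "Gam_q S = {b. \<exists>a. S $ a $ b \<noteq> 0}"

text \<open>T^i (entries of U^T A_i V, with the block (Gamma_p-perp, Gamma_q-perp) set to O) and
 R^i = U^T A_i V_Gamma (columns of U^T A_i V indexed by Gamma), up to the ordering of rows/columns.\<close>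
definition Tmat :: "real^'p::finite^'p \<Rightarrow> real^'q::finite^'p \<Rightarrow> real^'q^'q \<Rightarrow> real^'q^'p \<Rightarrow> real^'q^'p" where
  "Tmat U S V Ai = (\<chi> a b. if a \<in> Gam_p S \<or> b \<in> Gam_q S
        then (transpose U ** Ai ** V) $ a $ b else 0)"
definition Rmat :: "real^'p::finite^'p \<Rightarrow> real^'q::finite^'p \<Rightarrow> real^'q^'q \<Rightarrow> real^'q^'p \<Rightarrow> real^'q^'p" where
  "Rmat U S V Ai = (\<chi> a b. if b \<in> Gam_q S then (transpose U ** Ai ** V) $ a $ b else 0)"

definition assumption1 :: "('m::finite \<Rightarrow> real^'q::finite^'p::finite) \<Rightarrow> nat \<Rightarrow> real^'q^'p \<Rightarrow> bool" where
  "assumption1 A r W \<longleftrightarrow> (\<exists>U S V. is_svd W U S V \<and>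
     (rank W = r \<longrightarrow> lin_indep_family (\<lambda>i. Tmat U S V (A i))) \<and>
     (rank W < r \<longrightarrow> lin_indep_family (\<lambda>i. Rmat U S V (A i))))"

end

theory Submission
  imports Defs
begin

text \<open>Along a curve \<open>W + t D + t\<^sup>2 K\<close> that stays in the rank constraint and on which every
active constraint (\<open>z\<^sub>i = 0\<close>) strictly decreases, \<open>\<parallel>z\<^sub>+\<parallel>\<^sub>0\<close> is locally constant,
so local optimality gives \<open>\<langle>W, D\<rangle> \<ge> 0\<close>. When \<open>rank W = r\<close> such directions fill the tangent
space \<open>{W B + C W}\<close> of the fixed-rank manifold; when \<open>rank W < r\<close> they also contain every
rank-one perturbation of \<open>{C W}\<close>. Assumption 1 says precisely that the \<open>A\<^sub>i\<close> are linearly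
independent on these subspaces, so a Farkas argument yields multipliers \<open>\<mu> \<ge> 0\<close> supported on
the active set with \<open>M = W + \<A>\<^sup>*(\<mu>)\<close> orthogonal to the subspace. For \<open>rank W < r\<close> this
forces \<open>M = 0\<close>. For \<open>rank W = r\<close> it means that \<open>M\<close> annihilates the column and row spaces of
\<open>W\<close>, and the curvature estimate \<open>\<bar>\<langle>M, W' - W\<rangle>\<bar> = O(\<parallel>W' - W\<parallel>\<^sup>2)\<close> for nearby \<open>W'\<close> of rank at
most \<open>rank W\<close> puts \<open>-M\<close> into the regular normal cone. Taking \<open>\<lambda> = \<mu>\<close> and \<open>d = \<mu>/\<beta>\<close> gives
the KKT conditions.\<close>

lemma matrix_add_rdistrib: "(A + B) ** C = A ** C + B ** (C :: 'a::semiring_1^'n::finite^'k::finite)"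
  by (simp add: matrix_matrix_mult_def vec_eq_iff sum.distrib algebra_simps)

lemma inner_matrix: "(M :: real^'q::finite^'p::finite) \<bullet> N = (\<Sum>a\<in>UNIV. \<Sum>b\<in>UNIV. M$a$b * N$a$b)"
  by (simp add: inner_vec_def)

lemma inner_matrix_mult_right:
  fixes M :: "real^'q::finite^'p::finite" and X :: "real^'k::finite^'p" and Y :: "real^'q^'k"
  shows "M \<bullet> (X ** Y) = (transpose X ** M) \<bullet> Y"
proof -
  have "M \<bullet> (X ** Y) = (\<Sum>a\<in>UNIV. \<Sum>b\<in>UNIV. \<Sum>k\<in>UNIV. M$a$b * (X$a$k * Y$k$b))"
    by (simp add: inner_matrix matrix_matrix_mult_def sum_distrib_left)
  also have "\<dots> = (\<Sum>a\<in>UNIV. \<Sum>k\<in>UNIV. \<Sum>b\<in>UNIV. M$a$b * (X$a$k * Y$k$b))"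
    by (rule sum.cong[OF refl], rule sum.swap)
  also have "\<dots> = (\<Sum>k\<in>UNIV. \<Sum>a\<in>UNIV. \<Sum>b\<in>UNIV. M$a$b * (X$a$k * Y$k$b))"
    by (rule sum.swap)
  also have "\<dots> = (\<Sum>k\<in>UNIV. \<Sum>b\<in>UNIV. \<Sum>a\<in>UNIV. M$a$b * (X$a$k * Y$k$b))"
    by (rule sum.cong[OF refl], rule sum.swap)
  also have "\<dots> = (transpose X ** M) \<bullet> Y"
    by (simp add: inner_matrix matrix_matrix_mult_def transpose_def sum_distrib_left mult_ac)
  finally show ?thesis .
qed

lemma inner_matrix_mult_left:
  fixes M :: "real^'q::finite^'p::finite" and X :: "real^'k::finite^'p" and Y :: "real^'q^'k"
  shows "M \<bullet> (X ** Y) = (M ** transpose Y) \<bullet> X"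
proof -
  have "M \<bullet> (X ** Y) = (\<Sum>a\<in>UNIV. \<Sum>b\<in>UNIV. \<Sum>k\<in>UNIV. M$a$b * (X$a$k * Y$k$b))"
    by (simp add: inner_matrix matrix_matrix_mult_def sum_distrib_left)
  also have "\<dots> = (\<Sum>a\<in>UNIV. \<Sum>k\<in>UNIV. \<Sum>b\<in>UNIV. M$a$b * (X$a$k * Y$k$b))"
    by (rule sum.cong[OF refl], rule sum.swap)
  also have "\<dots> = (M ** transpose Y) \<bullet> X"
    by (simp add: inner_matrix matrix_matrix_mult_def transpose_def sum_distrib_left mult_ac)
  finally show ?thesis .
qed

lemma orthogonal_left_multiples_iff:
  fixes M W :: "real^'q::finite^'p::finite"
  shows "(\<forall>C::real^'p^'p. M \<bullet> (C ** W) = 0) \<longleftrightarrow> M ** transpose W = 0"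
  by (metis inner_eq_zero_iff inner_matrix_mult_left inner_zero_left)

lemma orthogonal_right_multiples_iff:
  fixes M W :: "real^'q::finite^'p::finite"
  shows "(\<forall>B::real^'q^'q. M \<bullet> (W ** B) = 0) \<longleftrightarrow> transpose W ** M = 0"
  by (metis inner_eq_zero_iff inner_matrix_mult_right inner_zero_left)

lemma norm_transpose: "norm (transpose (A::real^'n::finite^'m::finite)) = norm A"
proof -
  have "transpose A \<bullet> transpose A = A \<bullet> A"
    unfolding inner_matrix transpose_def by (simp add: sum.swap[of _ "UNIV::'n set"])
  then show ?thesis by (simp add: norm_eq_sqrt_inner)
qed

lemma norm_matrix_vector_mult_le: "norm ((A::real^'n::finite^'m::finite) *v x) \<le> norm A * norm x"
proof -
  have "norm (A *v x) = L2_set (\<lambda>i. \<bar>A$i \<bullet> x\<bar>) UNIV"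
    by (simp add: norm_vec_def matrix_mult_dot)
  also have "\<dots> \<le> L2_set (\<lambda>i. norm (A$i) * norm x) UNIV"
    by (rule L2_set_mono) (auto simp: Cauchy_Schwarz_ineq2)
  also have "\<dots> = norm x * L2_set (\<lambda>i. norm (A$i)) UNIV"
    by (simp add: L2_set_right_distrib mult.commute)
  also have "\<dots> = norm A * norm x" by (simp add: norm_vec_def)
  finally show ?thesis .
qed

lemma inner_matrix_vector_mult: "((A::real^'n::finite^'m::finite) *v x) \<bullet> y = x \<bullet> (transpose A *v y)"
  by (metis dot_lmul_matrix inner_commute transpose_matrix_vector)

lemma rank_add_le: "rank ((X::real^'n::finite^'m::finite) + Y) \<le> rank X + rank Y"
proof -
  let ?S = "range ((*v) X)" and ?T = "range ((*v) Y)"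
  have S: "subspace ?S" and T: "subspace ?T"
    by (simp_all add: linear_subspace_image matrix_vector_mul_linear)
  have "range ((*v) (X + Y)) \<subseteq> {a + b |a b. a \<in> ?S \<and> b \<in> ?T}"
    by (auto simp: matrix_vector_mult_add_rdistrib)
  then have "rank (X + Y) \<le> dim {a + b |a b. a \<in> ?S \<and> b \<in> ?T}"
    by (simp add: rank_dim_range dim_subset)
  also have "\<dots> \<le> dim ?S + dim ?T"
    using dim_sums_Int[OF S T] by linarith
  finally show ?thesis by (simp add: rank_dim_range)
qed

lemma rank_scaleR_le: "rank (c *\<^sub>R (X::real^'n::finite^'m::finite)) \<le> rank X"
proof -
  have "c *\<^sub>R X = (c *\<^sub>R mat 1 :: real^'m^'m) ** X"
    by (simp add: scalar_matrix_assoc[symmetric])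
  then show ?thesis by (metis rank_mul_le_right)
qed

lemma rank_matrix_unit_le: "rank (axis a (axis b 1) :: real^'n::finite^'m::finite) \<le> 1"
proof -
  have "range ((*v) (axis a (axis b 1) :: real^'n^'m)) \<subseteq> span {axis a 1}"
  proof
    fix y assume "y \<in> range ((*v) (axis a (axis b 1) :: real^'n^'m))"
    then obtain x where "y = (axis a (axis b 1) :: real^'n^'m) *v x" by blast
    moreover have "((axis a (axis b 1) :: real^'n^'m) *v x) $ i = ((x $ b) *\<^sub>R axis a 1) $ i" for i
      by (cases "i = a") (simp_all add: matrix_mult_dot inner_axis' axis_def[of a])
    ultimately have "y = (x $ b) *\<^sub>R axis a 1" by (simp add: vec_eq_iff)
    then show "y \<in> span {axis a 1}" by (simp add: span_base span_mul)
  qed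
  then have "rank (axis a (axis b 1) :: real^'n^'m) \<le> dim {axis a (1::real)}"
    unfolding rank_dim_range by (rule dim_mono)
  then show ?thesis by simp
qed

section \<open>Curvature of the rank variety\<close>

lemma transpose_bounded_below_on_range:
  fixes W :: "real^'q::finite^'p::finite"
  obtains c where "c > 0" "\<And>y. y \<in> range ((*v) W) \<Longrightarrow> c * norm y \<le> norm (transpose W *v y)"
proof -
  let ?R = "range ((*v) W)"
  have R: "subspace ?R"
    by (simp add: linear_subspace_image matrix_vector_mul_linear)
  have "y = 0" if "y \<in> ?R" "transpose W *v y = 0" for y
  proof -
    from that obtain w where "y = W *v w" by blast
    then have "y \<bullet> y = w \<bullet> (transpose W *v y)" by (simp add: inner_matrix_vector_mult)
    then show "y = 0" using that(2) by simp
  qed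
  then show ?thesis
    using injective_imp_isometric[OF closed_subspace[OF R] R matrix_vector_mul_bounded_linear]
      that by blast
qed

lemma exists_null_vector_in_span:
  fixes B :: "real^'n::finite^'m::finite"
  assumes "rank B < dim S"
  obtains x where "x \<in> span S" "x \<noteq> 0" "B *v x = 0"
proof -
  have "dim ((*v) B ` S) \<le> rank B"
    unfolding rank_dim_range by (rule dim_subset) auto
  then have "\<not> inj_on ((*v) B) (span S)"
    using dim_image_eq[OF matrix_vector_mul_linear] assms by fastforce
  then obtain x1 x2 where "x1 \<in> span S" "x2 \<in> span S" "x1 \<noteq> x2" "B *v x1 = B *v x2"
    unfolding inj_on_def by blast
  then show ?thesis
    by (intro that[of "x1 - x2"]) (simp_all add: span_diff matrix_vector_mult_diff_distrib)
qed

lemma left_null_vector_off_range: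
  fixes W W' :: "real^'q::finite^'p::finite"
  assumes u: "transpose W *v u = 0" "u \<noteq> 0" and rk: "rank W' \<le> rank W"
  obtains y \<alpha> where "y \<in> range ((*v) W)" "y + \<alpha> *\<^sub>R u \<noteq> 0" "transpose W' *v (y + \<alpha> *\<^sub>R u) = 0"
proof -
  let ?R = "range ((*v) W)"
  have span_R: "span ?R = ?R"
    by (simp add: linear_subspace_image matrix_vector_mul_linear)
  have "u \<notin> ?R"
  proof
    assume "u \<in> ?R"
    then obtain w where "u = W *v w" by blast
    then have "u \<bullet> u = w \<bullet> (transpose W *v u)" by (simp add: inner_matrix_vector_mult)
    then show False using u by simp
  qed
  then have "dim (insert u ?R) = rank W + 1"
    by (simp add: dim_insert span_R rank_dim_range)
  then have "rank (transpose W') < dim (insert u ?R)"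
    using rk by (simp add: rank_transpose)
  then obtain x where x: "x \<in> span (insert u ?R)" "x \<noteq> 0" "transpose W' *v x = 0"
    by (rule exists_null_vector_in_span)
  then obtain \<alpha> where "x - \<alpha> *\<^sub>R u \<in> ?R"
    using span_R by (auto simp: span_breakdown_eq)
  with x show ?thesis
    by (intro that[of "x - \<alpha> *\<^sub>R u" \<alpha>]) simp_all
qed

lemma left_null_vector_range_part_le:
  fixes W W' :: "real^'q::finite^'p::finite"
  assumes c: "\<And>y. y \<in> range ((*v) W) \<Longrightarrow> c * norm y \<le> norm (transpose W *v y)"
    and u: "transpose W *v u = 0" and y: "y \<in> range ((*v) W)"
    and null: "transpose W' *v (y + \<alpha> *\<^sub>R u) = 0"
  shows "c * norm y \<le> norm (W' - W) * norm (y + \<alpha> *\<^sub>R u)"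
proof -
  define x where "x = y + \<alpha> *\<^sub>R u"
  have "transpose W' = transpose W + transpose (W' - W)"
    by (simp add: transpose_def vec_eq_iff)
  then have "transpose W' *v x = transpose W *v y + transpose (W' - W) *v x"
    using u by (simp add: x_def matrix_vector_mult_add_rdistrib matrix_vector_right_distrib
        matrix_vector_mult_scaleR)
  then have "transpose W *v y = - (transpose (W' - W) *v x)"
    using null by (simp add: x_def eq_neg_iff_add_eq_0)
  then have "c * norm y \<le> norm (transpose (W' - W) *v x)"
    using c[OF y] by simp
  also have "\<dots> \<le> norm (W' - W) * norm x"
    using norm_matrix_vector_mult_le[of "transpose (W' - W)" x] by (simp add: norm_transpose)
  finally show ?thesis by (simp add: x_def)
qed

text \<open>A matrix \<open>W'\<close> of rank at most \<open>rank W\<close> has a left null vector \<open>x = y + \<alpha> u\<close> with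
\<open>y\<close> in the range of \<open>W\<close>; as \<open>W'\<close> is close to \<open>W\<close>, \<open>y\<close> is small compared with \<open>\<alpha> u\<close>, and
\<open>x\<^sup>T W' v = 0\<close> then bounds \<open>u \<bullet> (W' - W) v\<close> by a product of two small quantities.\<close>
lemma normal_component_quadratic_bound:
  fixes W W' :: "real^'q::finite^'p::finite"
  assumes c: "c > 0" "\<And>y. y \<in> range ((*v) W) \<Longrightarrow> c * norm y \<le> norm (transpose W *v y)"
    and u: "transpose W *v u = 0" and v: "W *v v = 0"
    and rk: "rank W' \<le> rank W" and small: "norm (W' - W) \<le> c / 2"
  shows "\<bar>u \<bullet> ((W' - W) *v v)\<bar> \<le> 2 * norm u * norm v * (norm (W' - W))\<^sup>2 / c"
proof (cases "u = 0")
  case False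
  define \<Delta> where "\<Delta> = W' - W"
  obtain y \<alpha> where y: "y \<in> range ((*v) W)" and x: "y + \<alpha> *\<^sub>R u \<noteq> 0"
    and null: "transpose W' *v (y + \<alpha> *\<^sub>R u) = 0"
    using left_null_vector_off_range[OF u False rk] by blast
  define x where "x = y + \<alpha> *\<^sub>R u"
  have W': "W' = W + \<Delta>" by (simp add: \<Delta>_def)
  have y_le: "c * norm y \<le> norm \<Delta> * norm x"
    using left_null_vector_range_part_le[OF c(2) u(1) y null] by (simp add: \<Delta>_def x_def)
  also have "\<dots> \<le> c * (norm x / 2)"
    using mult_right_mono[OF small norm_ge_zero, of x] by (simp add: \<Delta>_def)
  finally have "norm y \<le> norm x / 2" using c(1) by simp
  moreover have "norm x \<le> norm y + \<bar>\<alpha>\<bar> * norm u"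
    unfolding x_def by (metis norm_scaleR norm_triangle_ineq)
  ultimately have x_le: "norm x \<le> 2 * (\<bar>\<alpha>\<bar> * norm u)" by simp
  then have "\<bar>\<alpha>\<bar> > 0" using x by (auto simp: x_def)
  have "(\<Delta> *v v) \<bullet> x = (W' *v v) \<bullet> x"
    by (simp add: W' matrix_vector_mult_add_rdistrib v)
  also have "\<dots> = v \<bullet> (transpose W' *v x)" by (rule inner_matrix_vector_mult)
  finally have "\<alpha> * (u \<bullet> (\<Delta> *v v)) = - ((\<Delta> *v v) \<bullet> y)"
    using null by (simp add: x_def inner_add_right inner_commute eq_neg_iff_add_eq_0)
  then have "\<bar>\<alpha>\<bar> * \<bar>u \<bullet> (\<Delta> *v v)\<bar> = \<bar>(\<Delta> *v v) \<bullet> y\<bar>"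
    by (metis abs_minus_cancel abs_mult)
  also have "\<dots> \<le> norm (\<Delta> *v v) * norm y" by (rule Cauchy_Schwarz_ineq2)
  also have "\<dots> \<le> (norm \<Delta> * norm v) * (norm \<Delta> * norm x / c)"
    using y_le c(1) by (intro mult_mono norm_matrix_vector_mult_le) (auto simp: field_simps)
  also have "\<dots> \<le> (norm \<Delta> * norm v) * (norm \<Delta> * (2 * (\<bar>\<alpha>\<bar> * norm u)) / c)"
    using x_le c(1) by (intro mult_left_mono divide_right_mono) auto
  also have "\<dots> = \<bar>\<alpha>\<bar> * (2 * norm u * norm v * (norm \<Delta>)\<^sup>2 / c)"
    by (simp add: power2_eq_square field_simps)
  finally show ?thesis
    unfolding \<Delta>_def using \<open>\<bar>\<alpha>\<bar> > 0\<close> by (rule mult_left_le_imp_le)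
qed simp

section \<open>Singular value decomposition\<close>

lemma is_svdD:
  assumes "is_svd W U S V"
  shows "transpose U ** U = mat 1" "U ** transpose U = mat 1"
    "transpose V ** V = mat 1" "V ** transpose V = mat 1"
    "svd_middle S" "W = U ** S ** transpose V"
  using assms by (auto simp: is_svd_def orthogonal_matrix_def)

lemma matrix_vector_mult_column: "A *v column a B = column a (A ** B)"
  by (simp add: column_def matrix_vector_mult_def matrix_matrix_mult_def)

lemma svd_left_null_column:
  assumes "is_svd W U S V" "a \<notin> Gam_p S"
  shows "transpose W *v column a U = 0"
proof -
  have "transpose W ** U = V ** transpose S ** (transpose U ** U)"
    using is_svdD(6)[OF assms(1)] by (simp add: matrix_transpose_mul matrix_mul_assoc)
  then have "transpose W ** U = V ** transpose S"
    using is_svdD(1)[OF assms(1)] by simp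
  then have "transpose W *v column a U = column a (V ** transpose S)"
    by (simp add: matrix_vector_mult_column)
  then show ?thesis
    using assms(2) by (simp add: vec_eq_iff column_def matrix_matrix_mult_def transpose_def Gam_p_def)
qed

lemma svd_null_column:
  assumes "is_svd W U S V" "b \<notin> Gam_q S"
  shows "W *v column b V = 0"
proof -
  have "W ** V = U ** S ** (transpose V ** V)"
    using is_svdD(6)[OF assms(1)] by (simp add: matrix_mul_assoc)
  then have "W ** V = U ** S"
    using is_svdD(3)[OF assms(1)] by simp
  then have "W *v column b V = column b (U ** S)"
    by (simp add: matrix_vector_mult_column)
  then show ?thesis
    using assms(2) by (simp add: vec_eq_iff column_def matrix_matrix_mult_def Gam_q_def)
qed

lemma svd_conj_row_zero:
  assumes svd: "is_svd W U S V" and WM: "transpose W ** M = 0" and a: "a \<in> Gam_p S"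
  shows "(transpose U ** M ** V) $ a $ c = 0"
proof -
  define N where "N = transpose U ** M ** V"
  have "transpose W = V ** transpose S ** transpose U"
    using is_svdD(6)[OF svd] by (simp add: matrix_transpose_mul matrix_mul_assoc)
  then have "transpose V ** (V ** transpose S ** transpose U ** M) ** V = 0"
    using WM by (simp add: matrix_mul_assoc)
  then have N0: "transpose S ** N = 0"
    using is_svdD(3)[OF svd] by (simp add: N_def matrix_mul_assoc)
  from a obtain b where b: "S $ a $ b \<noteq> 0" by (auto simp: Gam_p_def)
  have "S $ a' $ b = 0" if "a' \<noteq> a" for a'
    using is_svdD(5)[OF svd] b that unfolding svd_middle_def by blast
  then have "(transpose S ** N) $ b $ c = S $ a $ b * N $ a $ c"
    by (simp add: matrix_matrix_mult_def transpose_def sum.remove[of _ a])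
  then show ?thesis using N0 b by (simp add: N_def)
qed

lemma svd_conj_column_zero:
  assumes svd: "is_svd W U S V" and MW: "M ** transpose W = 0" and b: "b \<in> Gam_q S"
  shows "(transpose U ** M ** V) $ a $ b = 0"
proof -
  define N where "N = transpose U ** M ** V"
  have "transpose W = V ** transpose S ** transpose U"
    using is_svdD(6)[OF svd] by (simp add: matrix_transpose_mul matrix_mul_assoc)
  then have "transpose U ** (M ** V ** transpose S ** transpose U) ** U = 0"
    using MW by (simp add: matrix_mul_assoc)
  then have N0: "N ** transpose S = 0"
    using is_svdD(1)[OF svd] by (simp add: N_def matrix_mul_assoc[symmetric])
  from b obtain a' where a': "S $ a' $ b \<noteq> 0" by (auto simp: Gam_q_def)
  have "S $ a' $ b' = 0" if "b' \<noteq> b" for b'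
    using is_svdD(5)[OF svd] a' that unfolding svd_middle_def by blast
  then have "(N ** transpose S) $ a $ a' = N $ a $ b * S $ a' $ b"
    by (simp add: matrix_matrix_mult_def transpose_def sum.remove[of _ b])
  then show ?thesis using N0 a' by (simp add: N_def)
qed

lemma conj_entry:
  fixes U :: "real^'p::finite^'p" and X :: "real^'q::finite^'p" and V :: "real^'q^'q"
  shows "(transpose U ** X ** V) $ a $ b = column a U \<bullet> (X *v column b V)"
  by (simp add: column_def matrix_matrix_mult_def matrix_vector_mult_def inner_vec_def
      transpose_def sum_distrib_left mult_ac sum.swap[of _ "UNIV::'q set"])

lemma inner_orthogonal_conj:
  fixes U :: "real^'p::finite^'p" and M X :: "real^'q::finite^'p" and V :: "real^'q^'q"
  assumes "U ** transpose U = mat 1" "V ** transpose V = mat 1"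
  shows "(transpose U ** M ** V) \<bullet> (transpose U ** X ** V) = M \<bullet> X"
proof -
  have "(transpose U ** M ** V) \<bullet> (transpose U ** (X ** V))
      = (transpose (transpose U) ** (transpose U ** M ** V)) \<bullet> (X ** V)"
    by (rule inner_matrix_mult_right)
  also have "\<dots> = (M ** V) \<bullet> (X ** V)"
    using assms(1) by (simp add: matrix_mul_assoc)
  also have "\<dots> = (M ** V ** transpose V) \<bullet> X"
    by (rule inner_matrix_mult_left)
  also have "\<dots> = M \<bullet> X"
    using assms(2) by (simp add: matrix_mul_assoc[symmetric])
  finally show ?thesis by (simp add: matrix_mul_assoc)
qed

lemma inner_svd_expansion:
  fixes U :: "real^'p::finite^'p" and M X :: "real^'q::finite^'p" and V :: "real^'q^'q"
  assumes "U ** transpose U = mat 1" "V ** transpose V = mat 1"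
  shows "M \<bullet> X = (\<Sum>a\<in>UNIV. \<Sum>b\<in>UNIV. (transpose U ** M ** V) $ a $ b * (column a U \<bullet> (X *v column b V)))"
  using inner_orthogonal_conj[OF assms, of M X] by (simp add: inner_matrix conj_entry)

lemma svd_normal_entry_quadratic_bound:
  fixes W M W' :: "real^'q::finite^'p::finite"
  assumes svd: "is_svd W U S V" and WM: "transpose W ** M = 0" and MW: "M ** transpose W = 0"
    and c: "c > 0" "\<And>y. y \<in> range ((*v) W) \<Longrightarrow> c * norm y \<le> norm (transpose W *v y)"
    and rk: "rank W' \<le> rank W" and small: "norm (W' - W) \<le> c / 2"
  shows "\<bar>(transpose U ** M ** V) $ a $ b * (column a U \<bullet> ((W' - W) *v column b V))\<bar>
    \<le> \<bar>(transpose U ** M ** V) $ a $ b\<bar> * (2 * norm (column a U) * norm (column b V) / c)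
       * (norm (W' - W))\<^sup>2"
proof (cases "a \<in> Gam_p S \<or> b \<in> Gam_q S")
  case True
  then show ?thesis
    using svd_conj_row_zero[OF svd WM] svd_conj_column_zero[OF svd MW] by auto
next
  case False
  then have "\<bar>column a U \<bullet> ((W' - W) *v column b V)\<bar>
      \<le> 2 * norm (column a U) * norm (column b V) * (norm (W' - W))\<^sup>2 / c"
    by (intro normal_component_quadratic_bound[OF c svd_left_null_column[OF svd]
        svd_null_column[OF svd] rk small]) auto
  then have "\<bar>(transpose U ** M ** V) $ a $ b\<bar> * \<bar>column a U \<bullet> ((W' - W) *v column b V)\<bar>
      \<le> \<bar>(transpose U ** M ** V) $ a $ b\<bar>
        * (2 * norm (column a U) * norm (column b V) * (norm (W' - W))\<^sup>2 / c)"
    by (rule mult_left_mono) simp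
  then show ?thesis
    by (simp add: abs_mult field_simps)
qed

lemma quadratic_bound_orthogonal_to_kernels:
  fixes W M :: "real^'q::finite^'p::finite"
  assumes svd: "is_svd W U S V" and WM: "transpose W ** M = 0" and MW: "M ** transpose W = 0"
  obtains K \<delta> where "K \<ge> 0" "\<delta> > 0"
    "\<And>W'. rank W' \<le> rank W \<Longrightarrow> norm (W' - W) < \<delta> \<Longrightarrow> \<bar>M \<bullet> (W' - W)\<bar> \<le> K * (norm (W' - W))\<^sup>2"
proof -
  obtain c where c: "c > 0" "\<And>y. y \<in> range ((*v) W) \<Longrightarrow> c * norm y \<le> norm (transpose W *v y)"
    using transpose_bounded_below_on_range[of W] by blast
  define N where "N = transpose U ** M ** V"
  define k where "k a b = \<bar>N $ a $ b\<bar> * (2 * norm (column a U) * norm (column b V) / c)" for a b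
  define K where "K = (\<Sum>a\<in>UNIV. \<Sum>b\<in>UNIV. k a b)"
  have "K \<ge> 0" unfolding K_def k_def using c(1) by (intro sum_nonneg) auto
  moreover have "\<bar>M \<bullet> (W' - W)\<bar> \<le> K * (norm (W' - W))\<^sup>2"
    if rk: "rank W' \<le> rank W" and small: "norm (W' - W) < c / 2" for W'
  proof -
    define \<Delta> where "\<Delta> = W' - W"
    have "\<bar>M \<bullet> \<Delta>\<bar> = \<bar>\<Sum>a\<in>UNIV. \<Sum>b\<in>UNIV. N $ a $ b * (column a U \<bullet> (\<Delta> *v column b V))\<bar>"
      using is_svdD(2,4)[OF svd] by (simp add: N_def inner_svd_expansion)
    also have "\<dots> \<le> (\<Sum>a\<in>UNIV. \<Sum>b\<in>UNIV. \<bar>N $ a $ b * (column a U \<bullet> (\<Delta> *v column b V))\<bar>)"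
      by (rule order_trans[OF sum_abs sum_mono]) (rule sum_abs)
    also have "\<dots> \<le> (\<Sum>a\<in>UNIV. \<Sum>b\<in>UNIV. k a b * (norm \<Delta>)\<^sup>2)"
      using svd_normal_entry_quadratic_bound[OF svd WM MW c rk] small
      by (intro sum_mono) (simp add: N_def k_def \<Delta>_def)
    also have "\<dots> = K * (norm \<Delta>)\<^sup>2" by (simp add: K_def sum_distrib_right)
    finally show ?thesis by (simp add: \<Delta>_def)
  qed
  ultimately show ?thesis
    using that c(1) by (metis half_gt_zero)
qed

section \<open>A Farkas lemma under a constraint qualification\<close>

text \<open>Linear independence constraint qualification: the functionals \<open>\<langle>g i, _\<rangle>\<close> stay linearly
independent when restricted to \<open>E\<close>.\<close>
definition licq_on :: "'v::real_inner set \<Rightarrow> ('i::finite \<Rightarrow> 'v) \<Rightarrow> bool" where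
  "licq_on E g \<longleftrightarrow> (\<forall>c. (\<forall>D\<in>E. (\<Sum>i\<in>UNIV. c i * (g i \<bullet> D)) = 0) \<longrightarrow> (\<forall>i. c i = 0))"

lemma licq_on_imp_onto:
  fixes g :: "'i::finite \<Rightarrow> 'v::real_inner"
  assumes E: "subspace E" and licq: "licq_on E g"
  shows "\<exists>D\<in>E. \<forall>i. g i \<bullet> D = y i"
proof -
  define \<phi> :: "'v \<Rightarrow> real^'i" where "\<phi> D = (\<chi> i. g i \<bullet> D)" for D
  have "linear \<phi>"
    unfolding \<phi>_def by (rule linearI) (auto simp: vec_eq_iff inner_add_right)
  then have sub: "subspace (\<phi> ` E)" by (rule linear_subspace_image[OF _ E])
  have "(\<chi> i. y i) \<in> \<phi> ` E"
  proof (rule ccontr)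
    assume "(\<chi> i. y i) \<notin> \<phi> ` E"
    then have "dim (\<phi> ` E) < DIM(real^'i)"
      using sub by (metis UNIV_I dim_eq_full dim_subset_UNIV le_neq_implies_less span_eq_iff)
    then obtain c where c: "c \<noteq> 0" "\<And>x. x \<in> span (\<phi> ` E) \<Longrightarrow> orthogonal c x"
      by (rule orthogonal_to_subspace_exists) blast
    have "(\<Sum>i\<in>UNIV. c $ i * (g i \<bullet> D)) = 0" if "D \<in> E" for D
      using c(2)[of "\<phi> D"] that by (simp add: span_base orthogonal_def \<phi>_def inner_vec_def)
    then have "\<forall>i. c $ i = 0"
      using licq unfolding licq_on_def by blast
    with c(1) show False by (simp add: vec_eq_iff)
  qed
  then show ?thesis
    by (auto simp: \<phi>_def vec_eq_iff)
qed

lemma licq_on_nonneg_closure: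
  fixes g :: "'i::finite \<Rightarrow> 'v::real_inner"
  assumes E: "subspace E" and licq: "licq_on E g"
    and T: "\<And>D D'. D \<in> T \<Longrightarrow> D' \<in> E \<Longrightarrow> D + D' \<in> T"
    and strict: "\<And>D. D \<in> T \<Longrightarrow> \<forall>i\<in>I. g i \<bullet> D < 0 \<Longrightarrow> w \<bullet> D \<ge> 0"
    and D: "D \<in> T" "\<forall>i\<in>I. g i \<bullet> D \<le> 0"
  shows "w \<bullet> D \<ge> 0"
proof -
  obtain D0 where D0: "D0 \<in> E" "\<And>i. g i \<bullet> D0 = -1"
    using licq_on_imp_onto[OF E licq, of "\<lambda>_. -1"] by auto
  have "0 \<le> w \<bullet> D + e" if e: "e > 0" for e
  proof -
    define \<epsilon> where "\<epsilon> = e / (\<bar>w \<bullet> D0\<bar> + 1)"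
    have \<epsilon>: "\<epsilon> > 0" using e by (simp add: \<epsilon>_def add_pos_nonneg)
    have "D + \<epsilon> *\<^sub>R D0 \<in> T"
      using T D(1) D0(1) E by (simp add: subspace_scale)
    moreover have "\<forall>i\<in>I. g i \<bullet> (D + \<epsilon> *\<^sub>R D0) < 0"
      using D(2) D0(2) \<epsilon> by (force simp: inner_add_right)
    ultimately have "w \<bullet> (D + \<epsilon> *\<^sub>R D0) \<ge> 0" by (rule strict)
    moreover have "\<epsilon> * (w \<bullet> D0) \<le> \<epsilon> * (\<bar>w \<bullet> D0\<bar> + 1)"
      using \<epsilon> by (intro mult_left_mono) auto
    moreover have "\<epsilon> * (\<bar>w \<bullet> D0\<bar> + 1) = e"
      by (simp add: \<epsilon>_def add_pos_nonneg)
    ultimately show ?thesis by (simp add: inner_add_right)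
  qed
  then show ?thesis by (rule field_le_epsilon)
qed

lemma licq_on_farkas:
  fixes g :: "'i::finite \<Rightarrow> 'v::real_inner"
  assumes E: "subspace E" and licq: "licq_on E g"
    and H: "\<And>D. D \<in> E \<Longrightarrow> \<forall>i\<in>I. g i \<bullet> D \<le> 0 \<Longrightarrow> w \<bullet> D \<ge> 0"
  obtains d where "\<And>i. i \<notin> I \<Longrightarrow> d i = 0" "\<And>i. d i \<ge> 0"
    "\<And>D. D \<in> E \<Longrightarrow> (w + (\<Sum>i\<in>UNIV. d i *\<^sub>R g i)) \<bullet> D = 0"
proof -
  have "\<forall>k. \<exists>D\<in>E. \<forall>i. g i \<bullet> D = (if i = k then 1 else 0)"
    using licq_on_imp_onto[OF E licq, of "\<lambda>i. if i = _ then 1 else 0"] by blast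
  then obtain Dk where Dk: "\<And>k. Dk k \<in> E" "\<And>k i. g i \<bullet> Dk k = (if i = k then 1 else 0)"
    by metis
  have zero: "w \<bullet> D = 0" if "D \<in> E" "\<forall>i\<in>I. g i \<bullet> D = 0" for D
    using H[of D] H[of "- D"] that E by (simp add: subspace_neg)
  define d where "d i = - (w \<bullet> Dk i)" for i
  show ?thesis
  proof
    show "d i = 0" if "i \<notin> I" for i
    proof -
      have "\<forall>j\<in>I. g j \<bullet> Dk i = 0" using that by (auto simp: Dk(2))
      then show ?thesis using zero[OF Dk(1)] by (simp add: d_def)
    qed
    show "d i \<ge> 0" for i
      using H[of "- Dk i"] Dk E by (simp add: d_def subspace_neg)
    fix D assume D: "D \<in> E"
    define D' where "D' = D - (\<Sum>i\<in>UNIV. (g i \<bullet> D) *\<^sub>R Dk i)"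
    have "D' \<in> E"
      unfolding D'_def using D Dk(1) E by (intro subspace_diff subspace_sum subspace_scale) auto
    moreover have "g k \<bullet> D' = 0" for k
      by (simp add: D'_def inner_diff_right inner_sum_right Dk(2) if_distrib cong: if_cong)
    ultimately have "w \<bullet> D' = 0" using zero by blast
    then show "(w + (\<Sum>i\<in>UNIV. d i *\<^sub>R g i)) \<bullet> D = 0"
      by (simp add: D'_def d_def inner_add_left inner_diff_right inner_sum_left inner_sum_right
          sum_negf mult.commute inner_commute)
  qed
qed

lemma eventually_pos_iff_quadratic:
  fixes z a b :: real
  assumes "z = 0 \<Longrightarrow> a < 0"
  shows "eventually (\<lambda>t. 0 < z + t * a + t\<^sup>2 * b \<longleftrightarrow> 0 < z) (at_right 0)"
proof -
  have lim: "((\<lambda>t. z + t * a + t\<^sup>2 * b) \<longlongrightarrow> z) (at_right 0)"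
    by (auto intro!: tendsto_eq_intros)
  consider "z > 0" | "z < 0" | "z = 0" by linarith
  then show ?thesis
  proof cases
    case 1
    with lim have "eventually (\<lambda>t. 0 < z + t * a + t\<^sup>2 * b) (at_right 0)"
      by (rule order_tendstoD(1))
    then show ?thesis by (rule eventually_mono) (use 1 in auto)
  next
    case 2
    with lim have "eventually (\<lambda>t. z + t * a + t\<^sup>2 * b < 0) (at_right 0)"
      by (rule order_tendstoD(2))
    then show ?thesis by (rule eventually_mono) (use 2 in auto)
  next
    case 3
    have "((\<lambda>t. a + t * b) \<longlongrightarrow> a) (at_right 0)"
      by (auto intro!: tendsto_eq_intros)
    then have "eventually (\<lambda>t. a + t * b < 0) (at_right 0)"
      using 3 assms by (auto dest: order_tendstoD(2))
    with eventually_at_right_less[of 0] show ?thesis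
    proof eventually_elim
      case (elim t)
      then have "t * (a + t * b) < 0" by (simp add: mult_pos_neg)
      with 3 show ?case by (simp add: power2_eq_square algebra_simps)
    qed
  qed
qed

text \<open>Along the curve the active entries of \<open>z\<close> become negative and the others keep their sign,
so \<open>\<parallel>z\<^sub>+\<parallel>\<^sub>0\<close> is constant for small \<open>t > 0\<close>.\<close>
lemma local_minimizer_eventually_norm_le:
  fixes A :: "'m::finite \<Rightarrow> real^'q::finite^'p::finite"
  assumes lm: "local_minimizer \<beta> A r W z"
    and rk: "\<And>t. t > 0 \<Longrightarrow> rank (W + t *\<^sub>R D + t\<^sup>2 *\<^sub>R K) \<le> r"
    and neg: "\<And>i. z $ i = 0 \<Longrightarrow> A i \<bullet> D < 0"
  shows "eventually (\<lambda>t. W \<bullet> W \<le> (W + t *\<^sub>R D + t\<^sup>2 *\<^sub>R K) \<bullet> (W + t *\<^sub>R D + t\<^sup>2 *\<^sub>R K)) (at_right 0)"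
proof -
  from lm have feas: "ones + opA A W = z"
    by (simp add: local_minimizer_def feas_set_def)
  from lm obtain e where "e > 0" and min: "\<And>W' z'. (W', z') \<in> feas_set A r \<Longrightarrow>
      dist (W', z') (W, z) < e \<Longrightarrow> objf \<beta> W z \<le> objf \<beta> W' z'"
    unfolding local_minimizer_def by blast
  define Wt where "Wt t = W + t *\<^sub>R D + t\<^sup>2 *\<^sub>R K" for t :: real
  define zt where "zt t = ones + opA A (Wt t)" for t
  have zt_nth: "zt t $ i = z $ i + t * (A i \<bullet> D) + t\<^sup>2 * (A i \<bullet> K)" for t i
    using feas by (auto simp: zt_def Wt_def opA_def ones_def inner_add_right)
  have "((\<lambda>t. (Wt t, zt t)) \<longlongrightarrow> (Wt 0, zt 0)) (at_right 0)"
    unfolding Wt_def zt_def opA_def by (intro tendsto_intros)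
  then have "eventually (\<lambda>t. dist (Wt t, zt t) (W, z) < e) (at_right 0)"
    using \<open>e > 0\<close> feas by (auto simp: Wt_def zt_def dest: tendstoD)
  moreover have "eventually (\<lambda>t. \<forall>i. 0 < zt t $ i \<longleftrightarrow> 0 < z $ i) (at_right 0)"
    using eventually_pos_iff_quadratic[OF neg]
    by (simp add: zt_nth eventually_all_finite)
  moreover note eventually_at_right_less[of 0]
  ultimately show ?thesis
  proof eventually_elim
    case (elim t)
    have "(Wt t, zt t) \<in> feas_set A r"
      using rk elim(3) by (simp add: feas_set_def zt_def Wt_def)
    then have "objf \<beta> W z \<le> objf \<beta> (Wt t) (zt t)"
      using min elim(1) by blast
    moreover have "pos_l0 (zt t) = pos_l0 z"
      using elim(2) by (simp add: pos_l0_def)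
    ultimately show ?case by (simp add: objf_def Wt_def)
  qed
qed

lemma local_minimizer_curve_inner_nonneg:
  fixes A :: "'m::finite \<Rightarrow> real^'q::finite^'p::finite"
  assumes lm: "local_minimizer \<beta> A r W z"
    and rk: "\<And>t. t > 0 \<Longrightarrow> rank (W + t *\<^sub>R D + t\<^sup>2 *\<^sub>R K) \<le> r"
    and neg: "\<And>i. z $ i = 0 \<Longrightarrow> A i \<bullet> D < 0"
  shows "W \<bullet> D \<ge> 0"
proof -
  define R where "R t = D \<bullet> D + 2 * (W \<bullet> K) + 2 * t * (D \<bullet> K) + t\<^sup>2 * (K \<bullet> K)" for t :: real
  have expand: "(W + t *\<^sub>R D + t\<^sup>2 *\<^sub>R K) \<bullet> (W + t *\<^sub>R D + t\<^sup>2 *\<^sub>R K)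
      = W \<bullet> W + t * (2 * (W \<bullet> D) + t * R t)" for t
    by (simp add: R_def inner_add_left inner_add_right inner_commute power2_eq_square
        algebra_simps)
  have "eventually (\<lambda>t. W \<bullet> W \<le> (W + t *\<^sub>R D + t\<^sup>2 *\<^sub>R K) \<bullet> (W + t *\<^sub>R D + t\<^sup>2 *\<^sub>R K))
      (at_right 0)"
    using lm rk neg by (rule local_minimizer_eventually_norm_le)
  moreover note eventually_at_right_less[of 0]
  ultimately have "eventually (\<lambda>t. 0 \<le> 2 * (W \<bullet> D) + t * R t) (at_right 0)"
  proof eventually_elim
    case (elim t)
    then have "0 \<le> t * (2 * (W \<bullet> D) + t * R t)" by (simp add: expand)
    with elim(2) show ?case by (simp add: zero_le_mult_iff)
  qed
  moreover have "((\<lambda>t. 2 * (W \<bullet> D) + t * R t) \<longlongrightarrow> 2 * (W \<bullet> D)) (at_right 0)"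
    unfolding R_def by (auto intro!: tendsto_eq_intros)
  ultimately have "0 \<le> 2 * (W \<bullet> D)"
    by (intro tendsto_lowerbound) auto
  then show ?thesis by simp
qed

lemma reg_normal_cone_of_quadratic_bound:
  fixes x v :: "'a::real_inner"
  assumes "\<delta> > 0"
    and bound: "\<And>x'. x' \<in> C \<Longrightarrow> x' \<noteq> x \<Longrightarrow> dist x' x < \<delta> \<Longrightarrow> v \<bullet> (x' - x) \<le> K * (norm (x' - x))\<^sup>2"
  shows "v \<in> reg_normal_cone C x"
  unfolding reg_normal_cone_def
proof (intro CollectI allI impI)
  fix \<epsilon> :: real assume "\<epsilon> > 0"
  define \<delta>' where "\<delta>' = min \<delta> (\<epsilon> / (\<bar>K\<bar> + 1))"
  have "v \<bullet> (x' - x) / norm (x' - x) \<le> \<epsilon>"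
    if "x' \<in> C" "x' \<noteq> x \<and> dist x' x < \<delta>'" for x'
  proof -
    have n: "0 < norm (x' - x)" "norm (x' - x) < \<delta>'"
      using that by (simp_all add: dist_norm)
    have "v \<bullet> (x' - x) \<le> K * norm (x' - x) * norm (x' - x)"
      using bound[OF that(1)] that(2) n(2) by (simp add: \<delta>'_def dist_norm power2_eq_square mult.assoc)
    then have "v \<bullet> (x' - x) / norm (x' - x) \<le> K * norm (x' - x)"
      using n(1) by (simp add: pos_divide_le_eq)
    also have "\<dots> \<le> \<bar>K\<bar> * norm (x' - x)"
      by (rule mult_right_mono) auto
    also have "\<dots> \<le> \<bar>K\<bar> * \<delta>'"
      using n(2) by (intro mult_left_mono) auto
    also have "\<dots> \<le> \<bar>K\<bar> * (\<epsilon> / (\<bar>K\<bar> + 1))"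
      by (intro mult_left_mono) (auto simp: \<delta>'_def)
    also have "\<dots> \<le> \<epsilon>"
      using \<open>\<epsilon> > 0\<close> by (simp add: field_simps)
    finally show ?thesis .
  qed
  moreover have "\<delta>' > 0" using \<open>\<delta> > 0\<close> \<open>\<epsilon> > 0\<close> by (simp add: \<delta>'_def)
  ultimately show "\<exists>\<delta>>0. \<forall>x'\<in>C. x' \<noteq> x \<and> dist x' x < \<delta> \<longrightarrow> v \<bullet> (x' - x) / norm (x' - x) \<le> \<epsilon>"
    by blast
qed

lemma feas_set_normal_of_quadratic_bound:
  fixes A :: "'m::finite \<Rightarrow> real^'q::finite^'p::finite"
  assumes "K \<ge> 0" "\<delta> > 0"
    and bound: "\<And>W'. rank W' \<le> r \<Longrightarrow> norm (W' - W) < \<delta> \<Longrightarrow> \<bar>M \<bullet> (W' - W)\<bar> \<le> K * (norm (W' - W))\<^sup>2"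
  shows "(- M, 0) \<in> reg_normal_cone (feas_set A r) (W, z)"
proof (rule reg_normal_cone_of_quadratic_bound[OF \<open>\<delta> > 0\<close>])
  fix x' assume "x' \<in> feas_set A r" "dist x' (W, z) < \<delta>"
  moreover obtain W' z' where x': "x' = (W', z')" by fastforce
  moreover have W'_le: "norm (W' - W) \<le> norm (x' - (W, z))"
    using norm_fst_le[of "W' - W" "z' - z"] by (simp add: x')
  ultimately have "\<bar>M \<bullet> (W' - W)\<bar> \<le> K * (norm (W' - W))\<^sup>2"
    by (intro bound) (auto simp: feas_set_def dist_norm)
  also have "\<dots> \<le> K * (norm (x' - (W, z)))\<^sup>2"
    using W'_le \<open>K \<ge> 0\<close> by (intro mult_left_mono power_mono) auto
  finally show "(- M, 0) \<bullet> (x' - (W, z)) \<le> K * (norm (x' - (W, z)))\<^sup>2"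
    by (simp add: x')
qed

section \<open>Admissible directions\<close>

definition tangent_space :: "real^'q::finite^'p::finite \<Rightarrow> (real^'q^'p) set" where
  "tangent_space W = {W ** B + C ** W | B C. True}"

definition left_multiples :: "real^'q::finite^'p::finite \<Rightarrow> (real^'q^'p) set" where
  "left_multiples W = {C ** W | C. True}"

definition rank_one_perturbations :: "real^'q::finite^'p::finite \<Rightarrow> (real^'q^'p) set" where
  "rank_one_perturbations W = {D + N | D N. D \<in> left_multiples W \<and> rank N \<le> 1}"

lemma subspace_tangent_space:
  fixes W :: "real^'q::finite^'p::finite"
  shows "subspace (tangent_space W)"
  unfolding subspace_def
proof (intro conjI ballI allI)
  show "0 \<in> tangent_space W"
    by (auto simp: tangent_space_def intro!: exI[of _ 0])
  fix x y assume "x \<in> tangent_space W" "y \<in> tangent_space W"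
  then obtain B1 C1 B2 C2 where "x = W ** B1 + C1 ** W" "y = W ** B2 + C2 ** W"
    by (auto simp: tangent_space_def)
  then show "x + y \<in> tangent_space W"
    by (auto simp: tangent_space_def matrix_add_ldistrib matrix_add_rdistrib algebra_simps
        intro!: exI[of _ "B1 + B2"] exI[of _ "C1 + C2"])
next
  fix c :: real and x assume "x \<in> tangent_space W"
  then obtain B C where "x = W ** B + C ** W"
    by (auto simp: tangent_space_def)
  then show "c *\<^sub>R x \<in> tangent_space W"
    by (auto simp: tangent_space_def matrix_scalar_ac scalar_matrix_assoc scaleR_add_right
        intro!: exI[of _ "c *\<^sub>R B"] exI[of _ "c *\<^sub>R C"])
qed

lemma subspace_left_multiples:
  fixes W :: "real^'q::finite^'p::finite"
  shows "subspace (left_multiples W)"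
  unfolding subspace_def
proof (intro conjI ballI allI)
  show "0 \<in> left_multiples W"
    by (auto simp: left_multiples_def intro!: exI[of _ 0])
  fix x y assume "x \<in> left_multiples W" "y \<in> left_multiples W"
  then obtain C1 C2 where "x = C1 ** W" "y = C2 ** W"
    by (auto simp: left_multiples_def)
  then show "x + y \<in> left_multiples W"
    by (auto simp: left_multiples_def matrix_add_rdistrib intro!: exI[of _ "C1 + C2"])
next
  fix c :: real and x assume "x \<in> left_multiples W"
  then obtain C where "x = C ** W"
    by (auto simp: left_multiples_def)
  then show "c *\<^sub>R x \<in> left_multiples W"
    by (auto simp: left_multiples_def scalar_matrix_assoc intro!: exI[of _ "c *\<^sub>R C"])
qed

lemma tangent_space_curve_rank_le:
  fixes W :: "real^'q::finite^'p::finite"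
  assumes "D \<in> tangent_space W"
  obtains K where "\<And>t. rank (W + t *\<^sub>R D + t\<^sup>2 *\<^sub>R K) \<le> rank W"
proof -
  obtain B C where D: "D = W ** B + C ** W"
    using assms unfolding tangent_space_def by blast
  have "W + t *\<^sub>R D + t\<^sup>2 *\<^sub>R (C ** W ** B) = (mat 1 + t *\<^sub>R C) ** W ** (mat 1 + t *\<^sub>R B)" for t
    by (simp add: D matrix_add_ldistrib matrix_add_rdistrib matrix_scalar_ac
        scalar_matrix_assoc[symmetric] matrix_mul_assoc power2_eq_square algebra_simps)
  then have "rank (W + t *\<^sub>R D + t\<^sup>2 *\<^sub>R (C ** W ** B)) \<le> rank W" for t
    using rank_mul_le_left[of "(mat 1 + t *\<^sub>R C) ** W" "mat 1 + t *\<^sub>R B"]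
      rank_mul_le_right[of "mat 1 + t *\<^sub>R C" W] by simp
  then show ?thesis by (rule that)
qed

lemma rank_one_perturbations_add:
  fixes W :: "real^'q::finite^'p::finite"
  assumes "D \<in> rank_one_perturbations W" "D' \<in> left_multiples W"
  shows "D + D' \<in> rank_one_perturbations W"
proof -
  obtain D0 N where D: "D = D0 + N" "D0 \<in> left_multiples W" "rank N \<le> 1"
    using assms(1) unfolding rank_one_perturbations_def by blast
  have "D + D' = (D0 + D') + N" using D(1) by simp
  moreover have "D0 + D' \<in> left_multiples W"
    using D(2) assms(2) by (rule subspace_add[OF subspace_left_multiples])
  ultimately show ?thesis
    using D(3) unfolding rank_one_perturbations_def by blast
qed

lemma left_multiples_subset_rank_one_perturbations:
  fixes W :: "real^'q::finite^'p::finite"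
  shows "left_multiples W \<subseteq> rank_one_perturbations W"
proof
  fix D assume "D \<in> left_multiples W"
  moreover have "D = D + 0" "rank (0 :: real^'q^'p) \<le> 1" by simp_all
  ultimately show "D \<in> rank_one_perturbations W"
    unfolding rank_one_perturbations_def by blast
qed

lemma rank_one_perturbation_rank_le:
  fixes W :: "real^'q::finite^'p::finite"
  assumes "D \<in> rank_one_perturbations W"
  shows "rank (W + t *\<^sub>R D) \<le> rank W + 1"
proof -
  obtain C N where D: "D = C ** W + N" and N: "rank N \<le> 1"
    using assms unfolding rank_one_perturbations_def left_multiples_def by blast
  have "W + t *\<^sub>R D = (mat 1 + t *\<^sub>R C) ** W + t *\<^sub>R N"
    by (simp add: D matrix_add_rdistrib scalar_matrix_assoc[symmetric] scaleR_add_right)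
  then have "rank (W + t *\<^sub>R D) \<le> rank ((mat 1 + t *\<^sub>R C) ** W) + rank (t *\<^sub>R N)"
    by (simp add: rank_add_le)
  also have "\<dots> \<le> rank W + 1"
    using rank_mul_le_right[of "mat 1 + t *\<^sub>R C" W] rank_scaleR_le[of t N] N by linarith
  finally show ?thesis .
qed

lemma linear_conj: "linear (\<lambda>X::real^'q::finite^'p::finite. (P::real^'p^'k::finite) ** X ** (Q::real^'l::finite^'q))"
  by (rule linearI)
     (simp_all add: matrix_matrix_mult_def vec_eq_iff sum_distrib_left sum.distrib algebra_simps
        sum_distrib_right)

lemma masked_conj_coeffs_zero:
  fixes A :: "'m::finite \<Rightarrow> real^'q::finite^'p::finite" and U :: "real^'p^'p" and V :: "real^'q^'q"
  assumes li: "lin_indep_family (\<lambda>i. \<chi> a b. if P a b then (transpose U ** A i ** V) $ a $ b else 0)"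
    and zero: "\<And>a b. P a b \<Longrightarrow> (transpose U ** (\<Sum>i\<in>UNIV. c i *\<^sub>R A i) ** V) $ a $ b = 0"
  shows "c i = 0"
proof -
  have "transpose U ** (\<Sum>i\<in>UNIV. c i *\<^sub>R A i) ** V = (\<Sum>i\<in>UNIV. c i *\<^sub>R (transpose U ** A i ** V))"
    using linear_sum[OF linear_conj[of "transpose U" V], of "\<lambda>i. c i *\<^sub>R A i" UNIV]
      linear_scale[OF linear_conj[of "transpose U" V]]
    by (simp add: o_def)
  then have "(\<Sum>i\<in>UNIV. c i *\<^sub>R (\<chi> a b. if P a b then (transpose U ** A i ** V) $ a $ b else 0)) $ a $ b = 0"
    for a b
    using zero[of a b] by (cases "P a b") (simp_all add: sum_component)
  then have "(\<Sum>i\<in>UNIV. c i *\<^sub>R (\<chi> a b. if P a b then (transpose U ** A i ** V) $ a $ b else 0)) = 0"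
    by (simp add: vec_eq_iff)
  with li show ?thesis
    unfolding lin_indep_family_def by blast
qed

lemma licq_on_tangent_space:
  fixes A :: "'m::finite \<Rightarrow> real^'q::finite^'p::finite"
  assumes svd: "is_svd W U S V" and li: "lin_indep_family (\<lambda>i. Tmat U S V (A i))"
  shows "licq_on (tangent_space W) A"
  unfolding licq_on_def
proof (intro allI impI)
  fix c :: "'m \<Rightarrow> real" and i
  assume h: "\<forall>D\<in>tangent_space W. (\<Sum>i\<in>UNIV. c i * (A i \<bullet> D)) = 0"
  define M where "M = (\<Sum>i\<in>UNIV. c i *\<^sub>R A i)"
  have M_tangent: "M \<bullet> (W ** B + C ** W) = 0" for B C
    using h by (auto simp: M_def inner_sum_left tangent_space_def)
  have "M \<bullet> (C ** W) = 0" for C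
    using M_tangent[of 0 C] by simp
  then have MW: "M ** transpose W = 0"
    using orthogonal_left_multiples_iff by blast
  have "M \<bullet> (W ** B) = 0" for B
    using M_tangent[of B 0] by simp
  then have WM: "transpose W ** M = 0"
    using orthogonal_right_multiples_iff by blast
  show "c i = 0"
  proof (rule masked_conj_coeffs_zero[where P = "\<lambda>a b. a \<in> Gam_p S \<or> b \<in> Gam_q S"])
    show "lin_indep_family (\<lambda>i. \<chi> a b. if a \<in> Gam_p S \<or> b \<in> Gam_q S
        then (transpose U ** A i ** V) $ a $ b else 0)"
      using li by (simp add: Tmat_def)
    show "(transpose U ** (\<Sum>i\<in>UNIV. c i *\<^sub>R A i) ** V) $ a $ b = 0"
      if "a \<in> Gam_p S \<or> b \<in> Gam_q S" for a b
      using that svd_conj_row_zero[OF svd WM] svd_conj_column_zero[OF svd MW]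
      by (auto simp flip: M_def)
  qed
qed

lemma licq_on_left_multiples:
  fixes A :: "'m::finite \<Rightarrow> real^'q::finite^'p::finite"
  assumes svd: "is_svd W U S V" and li: "lin_indep_family (\<lambda>i. Rmat U S V (A i))"
  shows "licq_on (left_multiples W) A"
  unfolding licq_on_def
proof (intro allI impI)
  fix c :: "'m \<Rightarrow> real" and i
  assume h: "\<forall>D\<in>left_multiples W. (\<Sum>i\<in>UNIV. c i * (A i \<bullet> D)) = 0"
  define M where "M = (\<Sum>i\<in>UNIV. c i *\<^sub>R A i)"
  have "M \<bullet> (C ** W) = 0" for C
    using h by (auto simp: M_def inner_sum_left left_multiples_def)
  then have MW: "M ** transpose W = 0"
    using orthogonal_left_multiples_iff by blast
  show "c i = 0"
  proof (rule masked_conj_coeffs_zero[where P = "\<lambda>a b. b \<in> Gam_q S"])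
    show "lin_indep_family (\<lambda>i. \<chi> a b. if b \<in> Gam_q S
        then (transpose U ** A i ** V) $ a $ b else 0)"
      using li by (simp add: Rmat_def)
    show "(transpose U ** (\<Sum>i\<in>UNIV. c i *\<^sub>R A i) ** V) $ a $ b = 0"
      if "b \<in> Gam_q S" for a b
      using that svd_conj_column_zero[OF svd MW] by (simp flip: M_def)
  qed
qed

lemma inner_opA_adj: "opA_adj A \<mu> \<bullet> X = (\<Sum>i\<in>UNIV. \<mu> $ i * (A i \<bullet> X))"
  by (simp add: opA_adj_def inner_sum_left)

lemma local_minimizer_nonneg_on_directions:
  fixes A :: "'m::finite \<Rightarrow> real^'q::finite^'p::finite"
  assumes lm: "local_minimizer \<beta> A r W z"
    and E: "subspace E" and licq: "licq_on E A"
    and T: "\<And>D D'. D \<in> T \<Longrightarrow> D' \<in> E \<Longrightarrow> D + D' \<in> T"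
    and adm: "\<And>D. D \<in> T \<Longrightarrow> \<exists>K. \<forall>t>0. rank (W + t *\<^sub>R D + t\<^sup>2 *\<^sub>R K) \<le> r"
    and D: "D \<in> T" "\<And>i. z $ i = 0 \<Longrightarrow> A i \<bullet> D \<le> 0"
  shows "W \<bullet> D \<ge> 0"
proof (rule licq_on_nonneg_closure[OF E licq T, where I = "{i. z $ i = 0}"])
  fix D' assume D': "D' \<in> T" "\<forall>i\<in>{i. z $ i = 0}. A i \<bullet> D' < 0"
  then obtain K where "\<forall>t>0. rank (W + t *\<^sub>R D' + t\<^sup>2 *\<^sub>R K) \<le> r"
    using adm by blast
  with D'(2) show "W \<bullet> D' \<ge> 0"
    by (intro local_minimizer_curve_inner_nonneg[OF lm]) auto
qed (use D in auto)

lemma local_minimizer_multipliers: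
  fixes A :: "'m::finite \<Rightarrow> real^'q::finite^'p::finite"
  assumes lm: "local_minimizer \<beta> A r W z"
    and E: "subspace E" and licq: "licq_on E A"
    and adm: "\<And>D. D \<in> E \<Longrightarrow> \<exists>K. \<forall>t>0. rank (W + t *\<^sub>R D + t\<^sup>2 *\<^sub>R K) \<le> r"
  obtains \<mu> where "\<mu> \<in> subdiff_pos_l0 z" "\<And>D. D \<in> E \<Longrightarrow> (W + opA_adj A \<mu>) \<bullet> D = 0"
proof -
  have "W \<bullet> D \<ge> 0" if "D \<in> E" "\<forall>i\<in>{i. z $ i = 0}. A i \<bullet> D \<le> 0" for D
    by (rule local_minimizer_nonneg_on_directions[where T = E, OF lm E licq _ adm])
      (use E that in \<open>auto simp: subspace_add\<close>)
  then obtain d where d: "\<And>i. i \<notin> {i. z $ i = 0} \<Longrightarrow> d i = 0" "\<And>i. d i \<ge> 0"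
    "\<And>D. D \<in> E \<Longrightarrow> (W + (\<Sum>i\<in>UNIV. d i *\<^sub>R A i)) \<bullet> D = 0"
    using licq_on_farkas[OF E licq] by blast
  show ?thesis
  proof
    show "(\<chi> i. d i) \<in> subdiff_pos_l0 z"
      using d(1,2) by (auto simp: subdiff_pos_l0_def)
    show "(W + opA_adj A (\<chi> i. d i)) \<bullet> D = 0" if "D \<in> E" for D
      using d(3)[OF that] by (simp add: opA_adj_def)
  qed
qed

lemma local_minimizer_multipliers_full_rank:
  fixes A :: "'m::finite \<Rightarrow> real^'q::finite^'p::finite"
  assumes lm: "local_minimizer \<beta> A r W z" and rk: "rank W = r"
    and licq: "licq_on (tangent_space W) A"
  obtains \<mu> where "\<mu> \<in> subdiff_pos_l0 z"
    "transpose W ** (W + opA_adj A \<mu>) = 0" "(W + opA_adj A \<mu>) ** transpose W = 0"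
proof -
  have "\<exists>K. \<forall>t>0. rank (W + t *\<^sub>R D + t\<^sup>2 *\<^sub>R K) \<le> r" if "D \<in> tangent_space W" for D
    using tangent_space_curve_rank_le[OF that] rk by metis
  then obtain \<mu> where \<mu>: "\<mu> \<in> subdiff_pos_l0 z"
    and M: "\<And>D. D \<in> tangent_space W \<Longrightarrow> (W + opA_adj A \<mu>) \<bullet> D = 0"
    using local_minimizer_multipliers[OF lm subspace_tangent_space licq] by blast
  have "W ** B + C ** W \<in> tangent_space W" for B C
    by (auto simp: tangent_space_def)
  then have "C ** W \<in> tangent_space W" "W ** B \<in> tangent_space W" for B C
    by (metis add.left_neutral times0_right, metis add.right_neutral times0_left)
  then show ?thesis
    using that[OF \<mu>] M orthogonal_left_multiples_iff orthogonal_right_multiples_iff by metis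
qed

lemma local_minimizer_multipliers_rank_deficient:
  fixes A :: "'m::finite \<Rightarrow> real^'q::finite^'p::finite"
  assumes lm: "local_minimizer \<beta> A r W z" and rk: "rank W < r"
    and licq: "licq_on (left_multiples W) A"
  obtains \<mu> where "\<mu> \<in> subdiff_pos_l0 z" "W + opA_adj A \<mu> = 0"
proof -
  let ?E = "left_multiples W" and ?T = "rank_one_perturbations W"
  have E: "subspace ?E" by (rule subspace_left_multiples)
  have adm: "\<exists>K. \<forall>t>0. rank (W + t *\<^sub>R D + t\<^sup>2 *\<^sub>R K) \<le> r" if "D \<in> ?T" for D
  proof -
    have "rank (W + t *\<^sub>R D + t\<^sup>2 *\<^sub>R 0) \<le> r" for t
      using rank_one_perturbation_rank_le[OF that, of t] rk by simp
    then show ?thesis by blast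
  qed
  obtain \<mu> where \<mu>: "\<mu> \<in> subdiff_pos_l0 z"
    and M_E: "\<And>D. D \<in> ?E \<Longrightarrow> (W + opA_adj A \<mu>) \<bullet> D = 0"
    using local_minimizer_multipliers[OF lm E licq adm] left_multiples_subset_rank_one_perturbations
    by blast
  have "(W + opA_adj A \<mu>) $ a $ b = 0" for a b
  proof -
    let ?N = "axis a (axis b 1) :: real^'q^'p"
    obtain D1 where D1: "D1 \<in> ?E" "\<And>i. A i \<bullet> D1 = - (A i \<bullet> ?N)"
      using licq_on_imp_onto[OF E licq, of "\<lambda>i. - (A i \<bullet> ?N)"] by blast
    \<comment> \<open>\<open>\<plusminus>(D1 + N)\<close> are admissible directions on which every constraint is stationary.\<close>
    have "rank (- ?N) \<le> 1"
      using rank_scaleR_le[of "-1" ?N] rank_matrix_unit_le[of a b] by simp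
    moreover have "- D1 \<in> ?E" by (rule subspace_neg[OF E D1(1)])
    ultimately have "D1 + ?N \<in> ?T" "- D1 + - ?N \<in> ?T"
      using D1(1) rank_matrix_unit_le[of a b] unfolding rank_one_perturbations_def by blast+
    moreover have dir0: "A i \<bullet> (D1 + ?N) = 0" "A i \<bullet> (- D1 + - ?N) = 0" for i
      using D1(2)[of i] by (simp_all add: inner_add_right inner_diff_right)
    ultimately have "W \<bullet> (D1 + ?N) \<ge> 0" "W \<bullet> (- D1 + - ?N) \<ge> 0"
      by (auto intro!: local_minimizer_nonneg_on_directions[OF lm E licq rank_one_perturbations_add adm])
    then have "W \<bullet> (D1 + ?N) = 0" by (simp add: inner_add_right inner_diff_right)
    then have "(W + opA_adj A \<mu>) \<bullet> (D1 + ?N) = 0"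
      using dir0(1) by (simp add: inner_add_left inner_opA_adj)
    with M_E[OF D1(1)] show ?thesis
      by (simp add: inner_add_right inner_axis)
  qed
  then show ?thesis
    using that[OF \<mu>] by (simp add: vec_eq_iff)
qed

lemma local_minimizer_multiplier_quadratic_bound:
  fixes A :: "'m::finite \<Rightarrow> real^'q::finite^'p::finite"
  assumes lm: "local_minimizer \<beta> A r W z" and "assumption1 A r W"
  obtains \<mu> K \<delta> where "\<mu> \<in> subdiff_pos_l0 z" "K \<ge> 0" "\<delta> > 0"
    "\<And>W'. rank W' \<le> r \<Longrightarrow> norm (W' - W) < \<delta> \<Longrightarrow>
      \<bar>(W + opA_adj A \<mu>) \<bullet> (W' - W)\<bar> \<le> K * (norm (W' - W))\<^sup>2"
proof -
  from lm have rk: "rank W \<le> r"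
    by (simp add: local_minimizer_def feas_set_def)
  from assms(2) obtain U S V where svd: "is_svd W U S V"
    and liT: "rank W = r \<Longrightarrow> lin_indep_family (\<lambda>i. Tmat U S V (A i))"
    and liR: "rank W < r \<Longrightarrow> lin_indep_family (\<lambda>i. Rmat U S V (A i))"
    unfolding assumption1_def by blast
  show ?thesis
  proof (cases "rank W = r")
    case True
    obtain \<mu> where \<mu>: "\<mu> \<in> subdiff_pos_l0 z"
      and WM: "transpose W ** (W + opA_adj A \<mu>) = 0" and MW: "(W + opA_adj A \<mu>) ** transpose W = 0"
      by (rule local_minimizer_multipliers_full_rank[OF lm True licq_on_tangent_space[OF svd liT[OF True]]])
    obtain K \<delta> where "K \<ge> 0" "\<delta> > 0" and bound: "\<And>W'. rank W' \<le> rank W \<Longrightarrow> norm (W' - W) < \<delta> \<Longrightarrow>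
        \<bar>(W + opA_adj A \<mu>) \<bullet> (W' - W)\<bar> \<le> K * (norm (W' - W))\<^sup>2"
      by (rule quadratic_bound_orthogonal_to_kernels[OF svd WM MW]) blast
    show ?thesis
      by (rule that[OF \<mu> \<open>K \<ge> 0\<close> \<open>\<delta> > 0\<close>]) (use bound True in auto)
  next
    case False
    with rk have lt: "rank W < r" by simp
    obtain \<mu> where \<mu>: "\<mu> \<in> subdiff_pos_l0 z" and M0: "W + opA_adj A \<mu> = 0"
      by (rule local_minimizer_multipliers_rank_deficient[OF lm lt licq_on_left_multiples[OF svd liR[OF lt]]])
    show ?thesis
      by (rule that[OF \<mu>, of 0 1]) (simp_all add: M0)
  qed
qed

theorem theorem1:
  fixes \<beta> :: real and r :: nat
    and A :: "'m::finite \<Rightarrow> real^'q::finite^'p::finite"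
    and W :: "real^'q^'p" and z :: "real^'m"
  assumes "\<beta> > 0"
    and "0 < r" and "r < min CARD('p) CARD('q)"
    and "local_minimizer \<beta> A r W z"
    and "assumption1 A r W"
  shows "KKT_point \<beta> A r W z"
proof -
  from assms(4) have feas: "ones + opA A W = z" and rk: "rank W \<le> r"
    by (auto simp: local_minimizer_def feas_set_def)
  obtain \<mu> K \<delta> where \<mu>: "\<mu> \<in> subdiff_pos_l0 z" and "K \<ge> 0" "\<delta> > 0"
    and bound: "\<And>W'. rank W' \<le> r \<Longrightarrow> norm (W' - W) < \<delta> \<Longrightarrow>
      \<bar>(W + opA_adj A \<mu>) \<bullet> (W' - W)\<bar> \<le> K * (norm (W' - W))\<^sup>2"
    using local_minimizer_multiplier_quadratic_bound[OF assms(4,5)] by blast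
  then have "(- (W + opA_adj A \<mu>), 0) \<in> reg_normal_cone (feas_set A r) (W, z)"
    by (intro feas_set_normal_of_quadratic_bound)
  moreover define d where "d = inverse \<beta> *\<^sub>R \<mu>"
  ultimately have "- (W + opA_adj A \<mu>, \<beta> *\<^sub>R d - \<mu>) \<in> reg_normal_cone (feas_set A r) (W, z)"
    using \<open>\<beta> > 0\<close> by simp
  moreover have "d \<in> subdiff_pos_l0 z"
    using \<mu> \<open>\<beta> > 0\<close> by (simp add: d_def subdiff_pos_l0_def)
  ultimately show ?thesis
    unfolding KKT_point_def using rk feas by auto
qed

end
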